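(* Let $X_1,\dots,X_n,Y_1,\dots,Y_n$ be independent standard normal random variables, $a_1,\dots,a_n\in\mathbb{R}$, and $p\ge1$ an integer. Then $$\frac{p!}{2^p}\sum_{\lambda\vdash p}\Big(\prod_{k\in\lambda}\binom{2k}{k}\Big)m_\lambda(a_1,\dots,a_n,a_1,\dots,a_n)=\mathbb{E}\Big(\sum_{i=1}^na_i(X_i^2+Y_i^2)\Big)^p=2^p\,p!\,h_p(a_1,\dots,a_n).$$
   Context: The sum is over integer partitions $\lambda$ of $p$, the product over parts $k$ of $\lambda$ with multiplicity. $m_\lambda(b_1,\dots,b_{2n})$ is the monomial symmetric polynomial in $2n$ variables (sum of all distinct monomials whose multiset of nonzero exponents equals the parts of $\lambda$), here evaluated at two copies of $a_1,\dots,a_n$. $h_p(a_1,\dots,a_n)$ is the complete homogeneous symmetric polynomial of degree $p$, the sum of all monomials of degree $p$ in $a_1,\dots,a_n$. *)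

theory Defs
  imports "HOL-Probability.Probability" "HOL-Library.Multiset"
begin

definition partitions :: "nat \<Rightarrow> nat multiset set" where
  "partitions p = {lam. (\<forall>k\<in>#lam. 0 < k) \<and> sum_mset lam = p}"

definition exps :: "nat \<Rightarrow> (nat \<Rightarrow> nat) set" where
  "exps N = {\<alpha>. \<forall>i. N \<le> i \<longrightarrow> \<alpha> i = 0}"

definition nz_exps :: "nat \<Rightarrow> (nat \<Rightarrow> nat) \<Rightarrow> nat multiset" where
  "nz_exps N \<alpha> = image_mset \<alpha> (filter_mset (\<lambda>i. \<alpha> i \<noteq> 0) (mset_set {..<N}))"

definition monomial_sym :: "nat multiset \<Rightarrow> nat \<Rightarrow> (nat \<Rightarrow> real) \<Rightarrow> real" where
  "monomial_sym lam N b =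
     (\<Sum>\<alpha>\<in>{\<alpha>\<in>exps N. nz_exps N \<alpha> = lam}. \<Prod>i<N. b i ^ \<alpha> i)"

definition complete_hom :: "nat \<Rightarrow> nat \<Rightarrow> (nat \<Rightarrow> real) \<Rightarrow> real" where
  "complete_hom p n a =
     (\<Sum>\<alpha>\<in>{\<alpha>\<in>exps n. (\<Sum>i<n. \<alpha> i) = p}. \<Prod>i<n. a i ^ \<alpha> i)"

end

theory Submission
  imports Defs "HOL-Computational_Algebra.Formal_Power_Series"
begin

(* Expectation: with S the partial sum over i < m and Z = a_m (X_m^2 + Y_m^2), which are
   independent, expanding (Z + S)^p binomially reduces everything to the moments
   E (X^2 + Y^2)^j = 2^j j!; these follow from the even normal moments and the central binomial
   convolution  sum_k C(2k,k) C(2(j-k),j-k) = 4^j  (Vandermonde's identity for binom(-1/2, _),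
   since C(2k,k) = (-4)^k binom(-1/2,k)).  The resulting recursion in m is the one of h_p.

   Partition sum: grouping the exponent vectors of total degree p by their multiset of nonzero
   exponents turns it into the coefficient of t^p in  prod_{i<2n} sum_k C(2k,k) (b_i t)^k.
   The variables come in equal pairs, and by the same convolution
   (sum_k C(2k,k) x^k)^2 = sum_k (4x)^k, so this coefficient is 4^p h_p(a). *)

lemma central_binomial_gbinomial:
  "real ((2 * k) choose k) = (-4) ^ k * ((-1/2 :: real) gchoose k)"
proof -
  have "real ((2 * k) choose k) = fact (2 * k) / (fact k * fact k)"
    by (simp add: binomial_fact)
  also have "\<dots> = 4 ^ k * pochhammer (1/2) k / fact k"
    by (simp add: fact_double power_mult)
  also have "\<dots> = (-4) ^ k * ((-1/2 :: real) gchoose k)"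
    by (simp add: gbinomial_pochhammer power_mult_distrib[symmetric])
  finally show ?thesis .
qed

lemma central_binomial_convolution:
  "(\<Sum>k=0..m. real ((2 * k) choose k) * real ((2 * (m - k)) choose (m - k))) = 4 ^ m"
proof -
  have "(\<Sum>k=0..m. real ((2 * k) choose k) * real ((2 * (m - k)) choose (m - k)))
      = (-4) ^ m * (\<Sum>k=0..m. ((-1/2 :: real) gchoose k) * ((-1/2) gchoose (m - k)))"
    unfolding sum_distrib_left
  proof (rule sum.cong[OF refl])
    fix k assume "k \<in> {0..m}"
    then have "(-4 :: real) ^ k * (-4) ^ (m - k) = (-4) ^ m"
      by (simp flip: power_add)
    then show "real ((2 * k) choose k) * real ((2 * (m - k)) choose (m - k))
        = (-4) ^ m * (((-1/2 :: real) gchoose k) * ((-1/2) gchoose (m - k)))"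
      unfolding central_binomial_gbinomial by (metis mult.assoc mult.left_commute)
  qed
  also have "\<dots> = (-4) ^ m * ((-1 :: real) gchoose m)"
    by (simp add: gbinomial_Vandermonde)
  also have "\<dots> = 4 ^ m"
    using gbinomial_minus[of "1::real" m]
    by (simp add: binomial_gbinomial[symmetric] flip: power_mult_distrib)
  finally show ?thesis .
qed

definition exps_of_degree :: "nat \<Rightarrow> nat \<Rightarrow> (nat \<Rightarrow> nat) set" where
  "exps_of_degree N q = {\<beta>\<in>exps N. (\<Sum>i<N. \<beta> i) = q}"

definition weighted_hom :: "(nat \<Rightarrow> real) \<Rightarrow> nat \<Rightarrow> nat \<Rightarrow> (nat \<Rightarrow> real) \<Rightarrow> real" where
  "weighted_hom w q N c = (\<Sum>\<beta>\<in>exps_of_degree N q. \<Prod>i<N. w (\<beta> i) * c i ^ \<beta> i)"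

definition weight_fps :: "(nat \<Rightarrow> real) \<Rightarrow> real \<Rightarrow> real fps" where
  "weight_fps w x = Abs_fps (\<lambda>k. w k * x ^ k)"

lemma finite_exps_of_degree: "finite (exps_of_degree N q)"
proof (rule finite_subset)
  have "\<beta> i \<le> q" if "\<beta> \<in> exps_of_degree N q" "i < N" for \<beta> i
    using that member_le_sum[of i "{..<N}" \<beta>] by (auto simp: exps_of_degree_def)
  then show "exps_of_degree N q
      \<subseteq> {\<beta>. \<forall>i. (i \<in> {..<N} \<longrightarrow> \<beta> i \<in> {..q}) \<and> (i \<notin> {..<N} \<longrightarrow> \<beta> i = 0)}"
    by (auto simp: exps_of_degree_def exps_def)
qed (intro finite_set_of_finite_funs; simp)

lemma exps_of_degree_Suc_slice:
  assumes "j \<le> q"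
  shows "{\<beta>\<in>exps_of_degree (Suc N) q. \<beta> N = j} = (\<lambda>\<beta>. \<beta>(N := j)) ` exps_of_degree N (q - j)"
proof (intro equalityI subsetI)
  fix \<beta> assume \<beta>: "\<beta> \<in> {\<beta>\<in>exps_of_degree (Suc N) q. \<beta> N = j}"
  have "(\<Sum>i<N. (\<beta>(N := 0)) i) = (\<Sum>i<N. \<beta> i)" by (intro sum.cong) auto
  with \<beta> have "\<beta>(N := 0) \<in> exps_of_degree N (q - j)"
    by (auto simp: exps_of_degree_def exps_def)
  moreover have "\<beta> = (\<beta>(N := 0))(N := j)" using \<beta> by auto
  ultimately show "\<beta> \<in> (\<lambda>\<beta>. \<beta>(N := j)) ` exps_of_degree N (q - j)" by blast
next
  fix \<beta> assume "\<beta> \<in> (\<lambda>\<beta>. \<beta>(N := j)) ` exps_of_degree N (q - j)"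
  then obtain \<gamma> where \<gamma>: "\<gamma> \<in> exps_of_degree N (q - j)" and \<beta>: "\<beta> = \<gamma>(N := j)" by auto
  have "(\<Sum>i<N. (\<gamma>(N := j)) i) = (\<Sum>i<N. \<gamma> i)" by (intro sum.cong) auto
  with \<gamma> \<beta> assms show "\<beta> \<in> {\<beta>\<in>exps_of_degree (Suc N) q. \<beta> N = j}"
    by (auto simp: exps_of_degree_def exps_def)
qed

lemma inj_on_fun_upd_exps_of_degree: "inj_on (\<lambda>\<beta>. \<beta>(N := j)) (exps_of_degree N q)"
proof (rule inj_onI)
  fix \<beta> \<gamma> assume "\<beta> \<in> exps_of_degree N q" "\<gamma> \<in> exps_of_degree N q"
    and upd: "\<beta>(N := j) = \<gamma>(N := j)"
  then have "\<beta> N = \<gamma> N"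
    by (simp add: exps_of_degree_def exps_def)
  with upd show "\<beta> = \<gamma>"
    by (metis fun_upd_triv fun_upd_upd)
qed

lemma weighted_hom_0: "weighted_hom w q 0 c = (if q = 0 then 1 else 0)"
proof -
  have "exps_of_degree 0 q = (if q = 0 then {\<lambda>_. 0} else {})"
    by (auto simp: exps_of_degree_def exps_def)
  then show ?thesis by (simp add: weighted_hom_def)
qed

lemma weighted_hom_Suc:
  "weighted_hom w q (Suc N) c = (\<Sum>j\<le>q. w j * c N ^ j * weighted_hom w (q - j) N c)"
proof -
  let ?f = "\<lambda>\<beta>. \<Prod>i<Suc N. w (\<beta> i) * c i ^ \<beta> i"
  have last_exp: "(\<lambda>\<beta>. \<beta> N) ` exps_of_degree (Suc N) q \<subseteq> {..q}"
    using member_le_sum[of N "{..<Suc N}"] by (auto simp: exps_of_degree_def)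
  have "weighted_hom w q (Suc N) c
      = (\<Sum>j\<le>q. \<Sum>\<beta>\<in>{\<beta>\<in>exps_of_degree (Suc N) q. \<beta> N = j}. ?f \<beta>)"
    unfolding weighted_hom_def
    by (rule sum.group[symmetric, OF finite_exps_of_degree _ last_exp]) simp
  also have "\<dots> = (\<Sum>j\<le>q. w j * c N ^ j * weighted_hom w (q - j) N c)"
  proof (rule sum.cong[OF refl])
    fix j assume "j \<in> {..q}"
    have "(\<Sum>\<beta>\<in>{\<beta>\<in>exps_of_degree (Suc N) q. \<beta> N = j}. ?f \<beta>)
        = (\<Sum>\<beta>\<in>exps_of_degree N (q - j). ?f (\<beta>(N := j)))"
      using \<open>j \<in> {..q}\<close> by (simp add: exps_of_degree_Suc_slice sum.reindex[OF inj_on_fun_upd_exps_of_degree])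
    also have "\<dots> = (\<Sum>\<beta>\<in>exps_of_degree N (q - j).
        w j * c N ^ j * (\<Prod>i<N. w (\<beta> i) * c i ^ \<beta> i))"
    proof (intro sum.cong refl)
      fix \<beta> :: "nat \<Rightarrow> nat"
      have "(\<Prod>i<N. w ((\<beta>(N := j)) i) * c i ^ (\<beta>(N := j)) i)
          = (\<Prod>i<N. w (\<beta> i) * c i ^ \<beta> i)"
        by (intro prod.cong) auto
      then show "?f (\<beta>(N := j)) = w j * c N ^ j * (\<Prod>i<N. w (\<beta> i) * c i ^ \<beta> i)"
        by simp
    qed
    finally show "(\<Sum>\<beta>\<in>{\<beta>\<in>exps_of_degree (Suc N) q. \<beta> N = j}. ?f \<beta>)
        = w j * c N ^ j * weighted_hom w (q - j) N c"
      by (simp add: weighted_hom_def sum_distrib_left)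
  qed
  finally show ?thesis .
qed

lemma weighted_hom_eq_fps_nth: "weighted_hom w q N c = fps_nth (\<Prod>i<N. weight_fps w (c i)) q"
proof (induction N arbitrary: q)
  case 0
  then show ?case by (simp add: weighted_hom_0)
next
  case (Suc N)
  have "fps_nth (\<Prod>i<Suc N. weight_fps w (c i)) q
      = fps_nth (weight_fps w (c N) * (\<Prod>i<N. weight_fps w (c i))) q"
    by (simp add: mult.commute)
  also have "\<dots> = (\<Sum>j\<le>q. w j * c N ^ j * weighted_hom w (q - j) N c)"
    by (simp add: fps_mult_nth weight_fps_def Suc.IH atLeast0AtMost)
  finally show ?case by (simp add: weighted_hom_Suc)
qed

lemma nz_exps_eq: "nz_exps N \<beta> = image_mset \<beta> (mset_set {i\<in>{..<N}. \<beta> i \<noteq> 0})"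
  by (simp add: nz_exps_def)

lemma sum_mset_nz_exps: "sum_mset (nz_exps N \<beta>) = (\<Sum>i<N. \<beta> i)"
proof -
  have "sum_mset (nz_exps N \<beta>) = (\<Sum>i\<in>{i\<in>{..<N}. \<beta> i \<noteq> 0}. \<beta> i)"
    by (simp add: nz_exps_eq sum_unfold_sum_mset)
  also have "\<dots> = (\<Sum>i<N. \<beta> i)"
    by (rule sum.mono_neutral_left) auto
  finally show ?thesis .
qed

lemma prod_mset_nz_exps:
  assumes "w 0 = 1"
  shows "(\<Prod>k\<in>#nz_exps N \<beta>. w k) = (\<Prod>i<N. w (\<beta> i))"
proof -
  have "(\<Prod>k\<in>#nz_exps N \<beta>. w k) = (\<Prod>i\<in>{i\<in>{..<N}. \<beta> i \<noteq> 0}. w (\<beta> i))"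
    by (simp add: nz_exps_eq prod_unfold_prod_mset multiset.map_comp o_def)
  also have "\<dots> = (\<Prod>i<N. w (\<beta> i))"
    by (rule prod.mono_neutral_left) (auto simp: assms)
  finally show ?thesis .
qed

lemma finite_partitions: "finite (partitions p)"
proof (rule finite_subset)
  show "partitions p \<subseteq> mset ` {xs. set xs \<subseteq> {..p} \<and> length xs \<le> p}"
  proof
    fix lam assume lam: "lam \<in> partitions p"
    obtain xs where xs: "mset xs = lam" using ex_mset by blast
    have "size lam \<le> sum_mset lam"
      if "\<forall>k\<in>#lam. 0 < k" for lam :: "nat multiset"
      using that by (induction lam) auto
    with lam have "size lam \<le> p"
      by (auto simp: partitions_def)
    then have "length xs \<le> p"
      by (simp flip: xs)
    moreover have "set xs \<subseteq> {..p}"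
      using lam by (auto simp: partitions_def sum_mset_sum_list member_le_sum_list simp flip: xs)
    ultimately show "lam \<in> mset ` {xs. set xs \<subseteq> {..p} \<and> length xs \<le> p}"
      using xs by blast
  qed
qed (intro finite_imageI finite_lists_length_le; simp)

lemma sum_partitions_monomial_sym:
  assumes "w 0 = 1"
  shows "(\<Sum>lam\<in>partitions p. (\<Prod>k\<in>#lam. w k) * monomial_sym lam N b) = weighted_hom w p N b"
proof -
  let ?f = "\<lambda>\<beta>. \<Prod>i<N. w (\<beta> i) * b i ^ \<beta> i"
  have "nz_exps N ` exps_of_degree N p \<subseteq> partitions p"
    unfolding partitions_def exps_of_degree_def
    by (auto simp: sum_mset_nz_exps) (auto simp: nz_exps_eq)
  then have "weighted_hom w p N b
      = (\<Sum>lam\<in>partitions p. \<Sum>\<beta>\<in>{\<beta>\<in>exps_of_degree N p. nz_exps N \<beta> = lam}. ?f \<beta>)"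
    unfolding weighted_hom_def
    by (rule sum.group[symmetric, OF finite_exps_of_degree finite_partitions])
  also have "\<dots> = (\<Sum>lam\<in>partitions p. (\<Prod>k\<in>#lam. w k) * monomial_sym lam N b)"
  proof (rule sum.cong[OF refl])
    fix lam assume "lam \<in> partitions p"
    then have "{\<beta>\<in>exps_of_degree N p. nz_exps N \<beta> = lam} = {\<beta>\<in>exps N. nz_exps N \<beta> = lam}"
      by (auto simp: exps_of_degree_def partitions_def sum_mset_nz_exps[symmetric])
    then show "(\<Sum>\<beta>\<in>{\<beta>\<in>exps_of_degree N p. nz_exps N \<beta> = lam}. ?f \<beta>)
        = (\<Prod>k\<in>#lam. w k) * monomial_sym lam N b"
      unfolding monomial_sym_def sum_distrib_left
      by (intro sum.cong) (auto simp: prod_mset_nz_exps[where w = w, OF assms] prod.distrib)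
  qed
  finally show ?thesis by simp
qed

lemma complete_hom_eq_weighted_hom: "complete_hom q n a = weighted_hom (\<lambda>_. 1) q n a"
  by (simp add: complete_hom_def weighted_hom_def exps_of_degree_def)

lemma complete_hom_0: "complete_hom q 0 a = (if q = 0 then 1 else 0)"
  by (simp add: complete_hom_eq_weighted_hom weighted_hom_0)

lemma complete_hom_Suc: "complete_hom q (Suc m) a = (\<Sum>j\<le>q. a m ^ j * complete_hom (q - j) m a)"
  by (simp add: complete_hom_eq_weighted_hom weighted_hom_Suc)

lemma weighted_hom_scale: "weighted_hom w q n (\<lambda>i. t * c i) = t ^ q * weighted_hom w q n c"
  unfolding weighted_hom_def sum_distrib_left
proof (rule sum.cong[OF refl])
  fix \<beta> assume "\<beta> \<in> exps_of_degree n q"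
  then have "(\<Prod>i<n. t ^ \<beta> i) = t ^ q"
    by (simp add: exps_of_degree_def power_sum[symmetric])
  then show "(\<Prod>i<n. w (\<beta> i) * (t * c i) ^ \<beta> i) = t ^ q * (\<Prod>i<n. w (\<beta> i) * c i ^ \<beta> i)"
    by (simp add: power_mult_distrib prod.distrib mult_ac)
qed

lemma weight_fps_central_binomial_square:
  "weight_fps (\<lambda>k. real ((2 * k) choose k)) x ^ 2 = weight_fps (\<lambda>_. 1) (4 * x)"
proof (rule fps_ext)
  fix m
  have "fps_nth (weight_fps (\<lambda>k. real ((2 * k) choose k)) x ^ 2) m
      = (\<Sum>k=0..m. x ^ m * (real ((2 * k) choose k) * real ((2 * (m - k)) choose (m - k))))"
    unfolding power2_eq_square fps_mult_nth
  proof (rule sum.cong[OF refl])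
    fix k assume "k \<in> {0..m}"
    then have "x ^ k * x ^ (m - k) = x ^ m" by (simp flip: power_add)
    then show "fps_nth (weight_fps (\<lambda>k. real ((2 * k) choose k)) x) k
        * fps_nth (weight_fps (\<lambda>k. real ((2 * k) choose k)) x) (m - k)
        = x ^ m * (real ((2 * k) choose k) * real ((2 * (m - k)) choose (m - k)))"
      by (simp add: weight_fps_def)
  qed
  then show "fps_nth (weight_fps (\<lambda>k. real ((2 * k) choose k)) x ^ 2) m
      = fps_nth (weight_fps (\<lambda>_. 1) (4 * x)) m"
    by (simp add: weight_fps_def power_mult_distrib central_binomial_convolution
        flip: sum_distrib_left)
qed

lemma prod_lessThan_doubled:
  fixes n :: nat
  shows "(\<Prod>i<2 * n. f (if i < n then a i else a (i - n))) = (\<Prod>i<n. f (a i)) ^ 2"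
proof -
  let ?g = "\<lambda>i. f (if i < n then a i else a (i - n))"
  have "(\<Prod>i<2 * n. ?g i) = prod ?g {0..<n} * prod ?g {n..<n + n}"
    unfolding mult_2 atLeast0LessThan[symmetric]
    by (rule prod.atLeastLessThan_concat[symmetric]) simp_all
  also have "prod ?g {0..<n} = (\<Prod>i<n. f (a i))"
    by (simp add: atLeast0LessThan)
  also have "prod ?g {n..<n + n} = prod (\<lambda>i. f (a (i - n))) {0 + n..<n + n}"
    by (intro prod.cong) auto
  also have "\<dots> = (\<Prod>i<n. f (a i))"
    by (simp only: prod.shift_bounds_nat_ivl) (simp add: atLeast0LessThan)
  finally show ?thesis by (simp add: power2_eq_square)
qed

lemma sum_partitions_central_binomial_doubled:
  "(\<Sum>lam\<in>partitions p. (\<Prod>k\<in>#lam. real ((2 * k) choose k)) *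
       monomial_sym lam (2 * n) (\<lambda>j. if j < n then a j else a (j - n)))
   = 4 ^ p * complete_hom p n a"
proof -
  let ?w = "\<lambda>k. real ((2 * k) choose k)"
  have "(\<Sum>lam\<in>partitions p. (\<Prod>k\<in>#lam. ?w k) *
       monomial_sym lam (2 * n) (\<lambda>j. if j < n then a j else a (j - n)))
      = fps_nth (\<Prod>i<2 * n. weight_fps ?w (if i < n then a i else a (i - n))) p"
    by (simp add: sum_partitions_monomial_sym weighted_hom_eq_fps_nth)
  also have "(\<Prod>i<2 * n. weight_fps ?w (if i < n then a i else a (i - n)))
      = (\<Prod>i<n. weight_fps (\<lambda>_. 1) (4 * a i))"
    by (simp add: prod_lessThan_doubled weight_fps_central_binomial_square
        prod_power_distrib)
  also have "fps_nth \<dots> p = 4 ^ p * complete_hom p n a"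
    by (simp add: complete_hom_eq_weighted_hom weighted_hom_scale
        flip: weighted_hom_eq_fps_nth)
  finally show ?thesis .
qed

context prob_space
begin

lemma
  assumes "distributed M lborel Z std_normal_density"
  shows integrable_std_normal_power: "integrable M (\<lambda>\<omega>. Z \<omega> ^ k)"
    and expectation_std_normal_even_power:
      "expectation (\<lambda>\<omega>. Z \<omega> ^ (2 * k)) = fact k * real ((2 * k) choose k) / 2 ^ k"
proof -
  show "integrable M (\<lambda>\<omega>. Z \<omega> ^ k)"
    using distributed_integrable[OF assms, of "\<lambda>x. x ^ k"] integrable_normal_moment[of 1 0 k]
    by simp
  have "expectation (\<lambda>\<omega>. Z \<omega> ^ (2 * k)) = (\<integral>x. std_normal_density x * x ^ (2 * k) \<partial>lborel)"
    by (rule distributed_integral[OF assms, symmetric]) auto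
  also have "\<dots> = fact (2 * k) / (2 ^ k * fact k)"
    by (rule integral_std_normal_moment_even)
  also have "\<dots> = fact k * real ((2 * k) choose k) / 2 ^ k"
    by (simp add: binomial_fact)
  finally show "expectation (\<lambda>\<omega>. Z \<omega> ^ (2 * k)) = fact k * real ((2 * k) choose k) / 2 ^ k" .
qed

lemma indep_var_restrict_compose:
  assumes "indep_vars (\<lambda>_. borel) W I"
    and "A \<inter> B = {}" "A \<subseteq> I" "B \<subseteq> I"
    and "F \<in> borel_measurable (PiM A (\<lambda>_. borel))"
    and "G \<in> borel_measurable (PiM B (\<lambda>_. borel))"
  shows "indep_var borel (\<lambda>\<omega>. F (\<lambda>i\<in>A. W i \<omega>)) borel (\<lambda>\<omega>. G (\<lambda>i\<in>B. W i \<omega>))"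
  using indep_var_compose[OF indep_var_restrict[OF assms(1-4)] assms(5,6)]
  by (simp add: o_def)

lemma
  fixes S Z :: "'a \<Rightarrow> real"
  assumes indep: "indep_var borel S borel Z"
    and S: "\<And>k. integrable M (\<lambda>\<omega>. S \<omega> ^ k)"
    and Z: "\<And>k. integrable M (\<lambda>\<omega>. Z \<omega> ^ k)"
  shows integrable_indep_add_power: "integrable M (\<lambda>\<omega>. (S \<omega> + Z \<omega>) ^ q)"
    and expectation_indep_add_power: "expectation (\<lambda>\<omega>. (S \<omega> + Z \<omega>) ^ q)
      = (\<Sum>j\<le>q. real (q choose j) * expectation (\<lambda>\<omega>. S \<omega> ^ j) * expectation (\<lambda>\<omega>. Z \<omega> ^ (q - j)))"
proof -
  have indep_powers: "indep_var borel (\<lambda>\<omega>. S \<omega> ^ j) borel (\<lambda>\<omega>. Z \<omega> ^ (q - j))" for j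
    using indep_var_compose[OF indep, of "\<lambda>x. x ^ j" borel "\<lambda>x. x ^ (q - j)" borel]
    by (simp add: o_def)
  have binomial: "(\<lambda>\<omega>. (S \<omega> + Z \<omega>) ^ q)
      = (\<lambda>\<omega>. \<Sum>j\<le>q. real (q choose j) * (S \<omega> ^ j * Z \<omega> ^ (q - j)))"
    by (simp add: binomial_ring mult.assoc)
  have terms: "integrable M (\<lambda>\<omega>. S \<omega> ^ j * Z \<omega> ^ (q - j))" for j
    using indep_var_integrable[OF indep_powers S Z] .
  then show "integrable M (\<lambda>\<omega>. (S \<omega> + Z \<omega>) ^ q)"
    unfolding binomial by auto
  show "expectation (\<lambda>\<omega>. (S \<omega> + Z \<omega>) ^ q)
      = (\<Sum>j\<le>q. real (q choose j) * expectation (\<lambda>\<omega>. S \<omega> ^ j) * expectation (\<lambda>\<omega>. Z \<omega> ^ (q - j)))"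
    unfolding binomial using terms
    by (simp add: integral_sum indep_var_lebesgue_integral[OF indep_powers S Z] mult.assoc)
qed

lemma
  assumes X: "distributed M lborel X std_normal_density"
    and Y: "distributed M lborel Y std_normal_density"
    and indep: "indep_var borel X borel Y"
  shows integrable_sum_squares_std_normal_power: "integrable M (\<lambda>\<omega>. (X \<omega> ^ 2 + Y \<omega> ^ 2) ^ q)"
    and expectation_sum_squares_std_normal_power:
      "expectation (\<lambda>\<omega>. (X \<omega> ^ 2 + Y \<omega> ^ 2) ^ q) = 2 ^ q * fact q"
proof -
  have indep_squares: "indep_var borel (\<lambda>\<omega>. X \<omega> ^ 2) borel (\<lambda>\<omega>. Y \<omega> ^ 2)"
    using indep_var_compose[OF indep, of "\<lambda>x. x ^ 2" borel "\<lambda>x. x ^ 2" borel]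
    by (simp add: o_def)
  have X2: "integrable M (\<lambda>\<omega>. (X \<omega> ^ 2) ^ k)" and Y2: "integrable M (\<lambda>\<omega>. (Y \<omega> ^ 2) ^ k)" for k
    by (simp_all add: integrable_std_normal_power[OF X] integrable_std_normal_power[OF Y]
        flip: power_mult)
  show "integrable M (\<lambda>\<omega>. (X \<omega> ^ 2 + Y \<omega> ^ 2) ^ q)"
    by (rule integrable_indep_add_power[OF indep_squares X2 Y2])
  have EX: "expectation (\<lambda>\<omega>. (X \<omega> ^ 2) ^ k) = fact k * real ((2 * k) choose k) / 2 ^ k"
    and EY: "expectation (\<lambda>\<omega>. (Y \<omega> ^ 2) ^ k) = fact k * real ((2 * k) choose k) / 2 ^ k" for k
    by (simp_all only: expectation_std_normal_even_power[OF X]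
        expectation_std_normal_even_power[OF Y] flip: power_mult)
  have "expectation (\<lambda>\<omega>. (X \<omega> ^ 2 + Y \<omega> ^ 2) ^ q)
      = (\<Sum>j=0..q. fact q / 2 ^ q * (real ((2 * j) choose j) * real ((2 * (q - j)) choose (q - j))))"
    unfolding expectation_indep_add_power[OF indep_squares X2 Y2] atLeast0AtMost
  proof (rule sum.cong[OF refl])
    fix j assume "j \<in> {..q}"
    then have "j \<le> q" by simp
    then have "real (q choose j) * fact j * fact (q - j) = fact q"
      and "(2::real) ^ j * 2 ^ (q - j) = 2 ^ q"
      by (simp_all add: binomial_fact flip: power_add)
    then show "real (q choose j) * expectation (\<lambda>\<omega>. (X \<omega> ^ 2) ^ j)
        * expectation (\<lambda>\<omega>. (Y \<omega> ^ 2) ^ (q - j))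
        = fact q / 2 ^ q * (real ((2 * j) choose j) * real ((2 * (q - j)) choose (q - j)))"
      unfolding EX EY by (simp add: field_simps)
  qed
  also have "\<dots> = fact q / 2 ^ q * 4 ^ q"
    by (simp only: central_binomial_convolution flip: sum_distrib_left)
  also have "\<dots> = 2 ^ q * fact q"
    using power_mult_distrib[of "2::real" 2 q] by simp
  finally show "expectation (\<lambda>\<omega>. (X \<omega> ^ 2 + Y \<omega> ^ 2) ^ q) = 2 ^ q * fact q" .
qed

lemma
  fixes X Y :: "nat \<Rightarrow> 'a \<Rightarrow> real" and a :: "nat \<Rightarrow> real"
  assumes indep: "indep_vars (\<lambda>_. borel) (\<lambda>(i, b). if b then X i else Y i) ({..<n} \<times> UNIV)"
    and "m < n"
  shows indep_var_pair: "indep_var borel (X m) borel (Y m)"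
    and indep_var_pair_partial_sum: "indep_var
      borel (\<lambda>\<omega>. a m * (X m \<omega> ^ 2 + Y m \<omega> ^ 2))
      borel (\<lambda>\<omega>. \<Sum>i<m. a i * (X i \<omega> ^ 2 + Y i \<omega> ^ 2))"
proof -
  show "indep_var borel (X m) borel (Y m)"
    using indep_var_restrict_compose[OF indep, of "{(m, True)}" "{(m, False)}"
        "\<lambda>f. f (m, True)" "\<lambda>f. f (m, False)"] \<open>m < n\<close>
    by simp
  define F where "F f = a m * (f (m, True) ^ 2 + f (m, False) ^ 2)" for f :: "nat \<times> bool \<Rightarrow> real"
  define G where "G f = (\<Sum>i<m. a i * (f (i, True) ^ 2 + f (i, False) ^ 2))"
    for f :: "nat \<times> bool \<Rightarrow> real"
  have "F \<in> borel_measurable (PiM ({m} \<times> UNIV) (\<lambda>_. borel))"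
    unfolding F_def by measurable
  moreover have "G \<in> borel_measurable (PiM ({..<m} \<times> UNIV) (\<lambda>_. borel))"
    unfolding G_def by measurable
  ultimately have "indep_var borel (\<lambda>\<omega>. F (\<lambda>i\<in>{m} \<times> UNIV. (\<lambda>(i, b). if b then X i else Y i) i \<omega>))
      borel (\<lambda>\<omega>. G (\<lambda>i\<in>{..<m} \<times> UNIV. (\<lambda>(i, b). if b then X i else Y i) i \<omega>))"
    using \<open>m < n\<close> by (intro indep_var_restrict_compose[OF indep]) auto
  moreover have "(\<lambda>\<omega>. G (\<lambda>i\<in>{..<m} \<times> UNIV. (\<lambda>(i, b). if b then X i else Y i) i \<omega>))
      = (\<lambda>\<omega>. \<Sum>i<m. a i * (X i \<omega> ^ 2 + Y i \<omega> ^ 2))"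
    unfolding G_def by (intro ext sum.cong) auto
  ultimately show "indep_var borel (\<lambda>\<omega>. a m * (X m \<omega> ^ 2 + Y m \<omega> ^ 2))
      borel (\<lambda>\<omega>. \<Sum>i<m. a i * (X i \<omega> ^ 2 + Y i \<omega> ^ 2))"
    by (simp add: F_def)
qed

lemma weighted_sum_squares_std_normal_power:
  fixes X Y :: "nat \<Rightarrow> 'a \<Rightarrow> real" and a :: "nat \<Rightarrow> real"
  assumes X: "\<And>i. i < n \<Longrightarrow> distributed M lborel (X i) std_normal_density"
    and Y: "\<And>i. i < n \<Longrightarrow> distributed M lborel (Y i) std_normal_density"
    and indep: "indep_vars (\<lambda>_. borel) (\<lambda>(i, b). if b then X i else Y i) ({..<n} \<times> UNIV)"
  shows "m \<le> n \<Longrightarrow> integrable M (\<lambda>\<omega>. (\<Sum>i<m. a i * (X i \<omega> ^ 2 + Y i \<omega> ^ 2)) ^ q)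
    \<and> expectation (\<lambda>\<omega>. (\<Sum>i<m. a i * (X i \<omega> ^ 2 + Y i \<omega> ^ 2)) ^ q)
      = 2 ^ q * fact q * complete_hom q m a"
proof (induction m arbitrary: q)
  case 0
  then show ?case by (simp add: complete_hom_0 prob_space)
next
  case (Suc m)
  define S where "S \<omega> = (\<Sum>i<m. a i * (X i \<omega> ^ 2 + Y i \<omega> ^ 2))" for \<omega>
  define Z where "Z \<omega> = a m * (X m \<omega> ^ 2 + Y m \<omega> ^ 2)" for \<omega>
  have "m < n" using Suc.prems by simp
  have S: "integrable M (\<lambda>\<omega>. S \<omega> ^ k)"
    "expectation (\<lambda>\<omega>. S \<omega> ^ k) = 2 ^ k * fact k * complete_hom k m a" for k
    using Suc.IH[of k] Suc.prems by (simp_all add: S_def)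
  note XY = X[OF \<open>m < n\<close>] Y[OF \<open>m < n\<close>] indep_var_pair[OF indep \<open>m < n\<close>]
  have Z: "integrable M (\<lambda>\<omega>. Z \<omega> ^ k)"
    "expectation (\<lambda>\<omega>. Z \<omega> ^ k) = a m ^ k * (2 ^ k * fact k)" for k
    using integrable_sum_squares_std_normal_power[OF XY, of k]
      expectation_sum_squares_std_normal_power[OF XY, of k]
    by (simp_all add: Z_def power_mult_distrib)
  have ZS: "indep_var borel Z borel S"
    using indep_var_pair_partial_sum[OF indep \<open>m < n\<close>, where a = a]
    unfolding Z_def[abs_def] S_def[abs_def] .
  have sum_Suc: "(\<lambda>\<omega>. (\<Sum>i<Suc m. a i * (X i \<omega> ^ 2 + Y i \<omega> ^ 2)) ^ q)
      = (\<lambda>\<omega>. (Z \<omega> + S \<omega>) ^ q)"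
    by (simp add: Z_def S_def add.commute)
  have "expectation (\<lambda>\<omega>. (Z \<omega> + S \<omega>) ^ q)
      = (\<Sum>j\<le>q. 2 ^ q * fact q * (a m ^ j * complete_hom (q - j) m a))"
    unfolding expectation_indep_add_power[OF ZS Z(1) S(1)]
  proof (rule sum.cong[OF refl])
    fix j assume "j \<in> {..q}"
    then have "real (q choose j) * fact j * fact (q - j) = fact q"
      and "(2::real) ^ j * 2 ^ (q - j) = 2 ^ q"
      by (simp_all add: binomial_fact flip: power_add)
    then show "real (q choose j) * expectation (\<lambda>\<omega>. Z \<omega> ^ j)
        * expectation (\<lambda>\<omega>. S \<omega> ^ (q - j))
        = 2 ^ q * fact q * (a m ^ j * complete_hom (q - j) m a)"
      unfolding Z(2) S(2) by (simp add: field_simps)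
  qed
  also have "\<dots> = 2 ^ q * fact q * complete_hom q (Suc m) a"
    by (simp add: complete_hom_Suc sum_distrib_left)
  finally show ?case
    unfolding sum_Suc using integrable_indep_add_power[OF ZS Z(1) S(1)] by simp
qed

end

theorem lemma4p2:
  fixes M :: "'w measure" and X Y :: "nat \<Rightarrow> 'w \<Rightarrow> real"
    and a :: "nat \<Rightarrow> real" and n p :: nat
  assumes "prob_space M"
    and "\<And>i. i < n \<Longrightarrow> distributed M lborel (X i) std_normal_density"
    and "\<And>i. i < n \<Longrightarrow> distributed M lborel (Y i) std_normal_density"
    and "prob_space.indep_vars M (\<lambda>_. borel)
           (\<lambda>(i, b). if b then X i else Y i) ({..<n} \<times> (UNIV :: bool set))"
    and "1 \<le> p"
  shows "fact p / 2 ^ p *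
           (\<Sum>lam\<in>partitions p.
              (\<Prod>k\<in>#lam. real ((2 * k) choose k)) *
              monomial_sym lam (2 * n) (\<lambda>j. if j < n then a j else a (j - n)))
         = prob_space.expectation M (\<lambda>\<omega>. (\<Sum>i<n. a i * (X i \<omega> ^ 2 + Y i \<omega> ^ 2)) ^ p)
       \<and> prob_space.expectation M (\<lambda>\<omega>. (\<Sum>i<n. a i * (X i \<omega> ^ 2 + Y i \<omega> ^ 2)) ^ p)
         = 2 ^ p * fact p * complete_hom p n a"
proof -
  have expectation:
    "prob_space.expectation M (\<lambda>\<omega>. (\<Sum>i<n. a i * (X i \<omega> ^ 2 + Y i \<omega> ^ 2)) ^ p)
      = 2 ^ p * fact p * complete_hom p n a"
    using prob_space.weighted_sum_squares_std_normal_power[OF assms(1-4), of n] by simp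
  have "(4::real) ^ p = 2 ^ p * 2 ^ p"
    by (simp flip: power_mult_distrib)
  then have "fact p / 2 ^ p *
      (\<Sum>lam\<in>partitions p. (\<Prod>k\<in>#lam. real ((2 * k) choose k)) *
        monomial_sym lam (2 * n) (\<lambda>j. if j < n then a j else a (j - n)))
      = 2 ^ p * fact p * complete_hom p n a"
    by (simp add: sum_partitions_central_binomial_doubled)
  with expectation show ?thesis by simp
qed

end
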